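(* Let $G$ be a finite simple graph with vertex set $V(G)=\{1,\dots,m\}$ and let $\vec p\in \mathrm{STAB}(G)\cup \mathrm{TH}(G)$. Then for every integer $n\ge 1$, the vector $\vec p^{\,\otimes n}\in[0,1]^{V(G)^n}$, with entries $(\vec p^{\,\otimes n})_{(i_1,\dots,i_n)}=p_{i_1}p_{i_2}\cdots p_{i_n}$, satisfies $$\sum_{(i_1,\dots,i_n)\in C} p_{i_1}\cdots p_{i_n}\le 1$$ for every clique $C$ of the graph $G^{\ast n}$. In other words, $\vec p^{\,\otimes n}\in \mathrm{QSTAB}(G^{\ast n})$ for all $n\ge 1$; that is, the classical and the quantum probability assignments for $G$ are self-consistent.
   Context: Graphs are finite and simple; a clique is a set of pairwise adjacent vertices. $\mathrm{STAB}(G)$ is the convex hull of the vectors $\vec p\in\{0,1\}^{V(G)}$ such that $p_ip_j=0$ whenever $\{i,j\}$ is an edge of $G$; this is the set of classical probability assignments for $G$. $\mathrm{TH}(G)$ is the set of vectors $\vec p\in[0,1]^{V(G)}$ for which there exist a finite-dimensional inner product space $\mathcal V$ and unit vectors $\psi, u_1,\dots,u_m\in\mathcal V$ with $\langle u_i,u_j\rangle=0$ for every edge $\{i,j\}$ of $G$ and $p_i=|\langle u_i,\psi\rangle|^2$ for all $i$; this is the set of quantum probability assignments for $G$. $\mathrm{QSTAB}(H)$ is the set of $\vec q\in[0,1]^{V(H)}$ with $\sum_{v\in C}q_v\le 1$ for every clique $C$ of $H$. The OR product $G\ast G'$ has vertex set $V(G)\times V(G')$, with $(i,i')$ and $(j,j')$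 adjacent iff $\{i,j\}\in E(G)$ or $\{i',j'\}\in E(G')$. $G^{\ast n}$ is the OR product of $n$ copies of $G$. A probability assignment $\vec p$ for $G$ is called self-consistent if $\vec p^{\,\otimes n}\in\mathrm{QSTAB}(G^{\ast n})$ for every $n\ge1$. *)

theory Defs
  imports "HOL-Analysis.Analysis"
begin

definition simple_graph :: "nat \<Rightarrow> (nat \<Rightarrow> nat \<Rightarrow> bool) \<Rightarrow> bool" where
  "simple_graph m E \<longleftrightarrow>
     (\<forall>i j. E i j \<longrightarrow> i \<in> {1..m} \<and> j \<in> {1..m}) \<and>
     (\<forall>i j. E i j \<longrightarrow> E j i) \<and> (\<forall>i. \<not> E i i)"

text \<open>Independent (stable) sets; their indicator vectors are exactly the 0/1 vectors
p with p_i p_j = 0 on every edge.\<close>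
definition indep :: "nat \<Rightarrow> (nat \<Rightarrow> nat \<Rightarrow> bool) \<Rightarrow> nat set \<Rightarrow> bool" where
  "indep m E S \<longleftrightarrow> S \<subseteq> {1..m} \<and> (\<forall>i\<in>S. \<forall>j\<in>S. \<not> E i j)"

text \<open>STAB(G): convex hull of the (finitely many) stable-set indicator vectors,
written as explicit convex combinations; vectors are indexed by V = {1..m}.\<close>
definition in_STAB :: "nat \<Rightarrow> (nat \<Rightarrow> nat \<Rightarrow> bool) \<Rightarrow> (nat \<Rightarrow> real) \<Rightarrow> bool" where
  "in_STAB m E p \<longleftrightarrow>
     (\<exists>w :: nat set \<Rightarrow> real.
        (\<forall>S. indep m E S \<longrightarrow> 0 \<le> w S) \<and>
        (\<Sum>S\<in>{S. indep m E S}. w S) = 1 \<and>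
        (\<forall>i\<in>{1..m}. p i = (\<Sum>S\<in>{S. indep m E S}. w S * indicator S i)))"

text \<open>Standard inner product on C^d (conjugate-linear in the first argument); every
finite-dimensional inner product space is isometric to some C^d.\<close>
definition cinner :: "nat \<Rightarrow> (nat \<Rightarrow> complex) \<Rightarrow> (nat \<Rightarrow> complex) \<Rightarrow> complex" where
  "cinner d x y = (\<Sum>k<d. cnj (x k) * y k)"

definition in_TH :: "nat \<Rightarrow> (nat \<Rightarrow> nat \<Rightarrow> bool) \<Rightarrow> (nat \<Rightarrow> real) \<Rightarrow> bool" where
  "in_TH m E p \<longleftrightarrow>
     (\<forall>i\<in>{1..m}. 0 \<le> p i \<and> p i \<le> 1) \<and>
     (\<exists>(d::nat) (\<psi>::nat \<Rightarrow> complex) (u::nat \<Rightarrow> nat \<Rightarrow> complex).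
        cinner d \<psi> \<psi> = 1 \<and>
        (\<forall>i\<in>{1..m}. cinner d (u i) (u i) = 1) \<and>
        (\<forall>i\<in>{1..m}. \<forall>j\<in>{1..m}. E i j \<longrightarrow> cinner d (u i) (u j) = 0) \<and>
        (\<forall>i\<in>{1..m}. p i = (cmod (cinner d (u i) \<psi>))\<^sup>2))"

definition is_clique :: "'a set \<Rightarrow> ('a \<Rightarrow> 'a \<Rightarrow> bool) \<Rightarrow> 'a set \<Rightarrow> bool" where
  "is_clique V A C \<longleftrightarrow> C \<subseteq> V \<and> (\<forall>x\<in>C. \<forall>y\<in>C. x \<noteq> y \<longrightarrow> A x y)"

definition QSTAB :: "'a set \<Rightarrow> ('a \<Rightarrow> 'a \<Rightarrow> bool) \<Rightarrow> ('a \<Rightarrow> real) set" where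
  "QSTAB V A = {q. (\<forall>v\<in>V. 0 \<le> q v \<and> q v \<le> 1) \<and>
                   (\<forall>C. is_clique V A C \<longrightarrow> (\<Sum>v\<in>C. q v) \<le> 1)}"

definition or_pow_verts :: "nat \<Rightarrow> nat \<Rightarrow> nat list set" where
  "or_pow_verts m n = {xs. length xs = n \<and> set xs \<subseteq> {1..m}}"

definition or_pow_adj :: "(nat \<Rightarrow> nat \<Rightarrow> bool) \<Rightarrow> nat list \<Rightarrow> nat list \<Rightarrow> bool" where
  "or_pow_adj E xs ys \<longleftrightarrow> (\<exists>k < min (length xs) (length ys). E (xs ! k) (ys ! k))"

definition tensor_pow :: "(nat \<Rightarrow> real) \<Rightarrow> nat list \<Rightarrow> real" where
  "tensor_pow p xs = prod_list (map p xs)"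

end

theory Submission
  imports Defs
begin

text \<open>
  Distinct members of a clique \<open>C\<close> of the OR power are adjacent in some coordinate.
  For a quantum assignment \<open>p\<^sub>i = |\<langle>u\<^sub>i, \<psi>\<rangle>|\<^sup>2\<close> this makes the tensor products
  \<open>u(x\<^sub>1) \<otimes> \<dots> \<otimes> u(x\<^sub>n)\<close>, \<open>x \<in> C\<close>, orthonormal, and the clique sum of \<open>p\<^sup>\<otimes>\<^sup>n\<close> is
  bounded by Bessel's inequality for the unit vector \<open>\<psi>\<^sup>\<otimes>\<^sup>n\<close>.
  For a classical assignment \<open>p = \<Sum>\<^sub>S w\<^sub>S 1\<^sub>S\<close>, the power \<open>p\<^sup>\<otimes>\<^sup>n\<close> is a convex combination of
  indicators of boxes \<open>S\<^sub>1 \<times> \<dots> \<times> S\<^sub>n\<close> of stable sets, and a clique meets each box in at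
  most one point.
\<close>

definition cinner_on :: "'i set \<Rightarrow> ('i \<Rightarrow> complex) \<Rightarrow> ('i \<Rightarrow> complex) \<Rightarrow> complex" where
  "cinner_on I x y = (\<Sum>k\<in>I. cnj (x k) * y k)"

lemma cinner_conv_cinner_on: "cinner d x y = cinner_on {..<d} x y"
  unfolding cinner_def cinner_on_def ..

lemma cinner_on_commute: "cinner_on I y x = cnj (cinner_on I x y)"
  unfolding cinner_on_def by (simp add: mult.commute)

lemma cinner_on_self: "cinner_on I x x = of_real (\<Sum>k\<in>I. (cmod (x k))\<^sup>2)"
  unfolding cinner_on_def of_real_sum
  by (intro sum.cong refl) (metis complex_norm_square mult.commute of_real_power)

lemma Re_cinner_on_self_nonneg: "0 \<le> Re (cinner_on I x x)"
  by (simp add: cinner_on_self sum_nonneg)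

lemma cinner_on_diff_left: "cinner_on I (\<lambda>k. x k - y k) z = cinner_on I x z - cinner_on I y z"
  unfolding cinner_on_def by (simp add: algebra_simps sum_subtractf)

lemma cinner_on_diff_right: "cinner_on I z (\<lambda>k. x k - y k) = cinner_on I z x - cinner_on I z y"
  unfolding cinner_on_def by (simp add: algebra_simps sum_subtractf)

lemma cinner_on_sum_left:
  "cinner_on I (\<lambda>k. \<Sum>c\<in>C. f c * e c k) y = (\<Sum>c\<in>C. cnj (f c) * cinner_on I (e c) y)"
  unfolding cinner_on_def
  by (simp add: cnj_sum sum_distrib_left sum_distrib_right algebra_simps sum.swap[of _ I])

lemma cinner_on_sum_right:
  "cinner_on I x (\<lambda>k. \<Sum>c\<in>C. f c * e c k) = (\<Sum>c\<in>C. f c * cinner_on I x (e c))"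
  unfolding cinner_on_def
  by (simp add: sum_distrib_left sum_distrib_right algebra_simps sum.swap[of _ I])

lemma cinner_on_prod_PiE:
  assumes "finite K" and "\<And>k. k \<in> K \<Longrightarrow> finite (A k)"
  shows "cinner_on (PiE K A) (\<lambda>g. \<Prod>k\<in>K. x k (g k)) (\<lambda>g. \<Prod>k\<in>K. y k (g k))
           = (\<Prod>k\<in>K. cinner_on (A k) (x k) (y k))"
  unfolding cinner_on_def using assms
  by (simp add: prod_sum_PiE cnj_prod prod.distrib)

lemma bessel_inequality:
  assumes "finite C"
    and orthonormal: "\<And>a b. a \<in> C \<Longrightarrow> b \<in> C \<Longrightarrow> cinner_on I (e a) (e b) = (if a = b then 1 else 0)"
  shows "(\<Sum>c\<in>C. (cmod (cinner_on I (e c) \<psi>))\<^sup>2) \<le> Re (cinner_on I \<psi> \<psi>)"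
proof -
  define a where "a c = cinner_on I (e c) \<psi>" for c
  define v where "v k = (\<Sum>c\<in>C. a c * e c k)" for k
  let ?s = "\<Sum>c\<in>C. cnj (a c) * a c"
  have "cinner_on I v v = (\<Sum>c\<in>C. cnj (a c) * (\<Sum>c'\<in>C. a c' * cinner_on I (e c) (e c')))"
    unfolding v_def by (simp add: cinner_on_sum_left cinner_on_sum_right)
  also have "\<dots> = (\<Sum>c\<in>C. cnj (a c) * (\<Sum>c'\<in>C. if c = c' then a c' else 0))"
    by (intro sum.cong refl arg_cong2[where f="(*)"]) (simp_all add: orthonormal)
  also have "\<dots> = ?s"
    using \<open>finite C\<close> by (simp add: sum.delta)
  finally have vv: "cinner_on I v v = ?s" .
  have v\<psi>: "cinner_on I v \<psi> = ?s"
    unfolding v_def by (simp add: cinner_on_sum_left a_def)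
  then have \<psi>v: "cinner_on I \<psi> v = ?s"
    by (simp add: cinner_on_commute[of I \<psi> v] cnj_sum mult.commute)
  have "0 \<le> Re (cinner_on I (\<lambda>k. \<psi> k - v k) (\<lambda>k. \<psi> k - v k))"
    by (rule Re_cinner_on_self_nonneg)
  also have "\<dots> = Re (cinner_on I \<psi> \<psi>) - Re ?s"
    using vv v\<psi> \<psi>v by (simp add: cinner_on_diff_left cinner_on_diff_right)
  finally have "Re ?s \<le> Re (cinner_on I \<psi> \<psi>)" by simp
  moreover have "Re ?s = (\<Sum>c\<in>C. (cmod (a c))\<^sup>2)"
    by (simp, intro sum.cong refl) (metis cmod_power2 power2_eq_square)
  ultimately show ?thesis by (simp add: a_def)
qed

lemma finite_or_pow_verts: "finite (or_pow_verts m n)"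
proof -
  have "or_pow_verts m n = {xs. set xs \<subseteq> {1..m} \<and> length xs = n}"
    unfolding or_pow_verts_def by blast
  with finite_lists_length_eq[OF finite_atLeastAtMost] show ?thesis
    by metis
qed

lemma or_pow_verts_nth: "xs \<in> or_pow_verts m n \<Longrightarrow> k < n \<Longrightarrow> xs ! k \<in> {1..m}"
  unfolding or_pow_verts_def by (auto simp: subset_iff)

lemma or_pow_adj_coordinate:
  assumes "xs \<in> or_pow_verts m n" "ys \<in> or_pow_verts m n" "or_pow_adj E xs ys"
  obtains k where "k < n" "E (xs ! k) (ys ! k)"
  using assms unfolding or_pow_verts_def or_pow_adj_def by auto

lemma clique_subset_verts: "is_clique V A C \<Longrightarrow> C \<subseteq> V"
  unfolding is_clique_def by blast

lemma finite_or_pow_clique: "is_clique (or_pow_verts m n) A C \<Longrightarrow> finite C"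
  by (rule finite_subset[OF clique_subset_verts finite_or_pow_verts])

lemma tensor_pow_conv_prod: "length xs = n \<Longrightarrow> tensor_pow p xs = (\<Prod>k<n. p (xs ! k))"
  unfolding tensor_pow_def prod.list_conv_set_nth by (simp add: atLeast0LessThan)

lemma sum_tensor_pow_clique:
  assumes "is_clique (or_pow_verts m n) A C" and "\<And>i. i \<in> {1..m} \<Longrightarrow> p i = q i"
  shows "(\<Sum>xs\<in>C. tensor_pow p xs) = (\<Sum>xs\<in>C. \<Prod>k<n. q (xs ! k))"
proof (intro sum.cong refl)
  fix xs assume "xs \<in> C"
  then have xs: "xs \<in> or_pow_verts m n"
    using clique_subset_verts[OF assms(1)] by blast
  then have "length xs = n" unfolding or_pow_verts_def by simp
  with xs show "tensor_pow p xs = (\<Prod>k<n. q (xs ! k))"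
    by (auto simp: tensor_pow_conv_prod intro!: prod.cong assms(2) or_pow_verts_nth[OF xs])
qed

lemma tensor_pow_bounds:
  assumes "\<forall>i\<in>{1..m}. 0 \<le> p i \<and> p i \<le> 1" and "xs \<in> or_pow_verts m n"
  shows "0 \<le> tensor_pow p xs \<and> tensor_pow p xs \<le> 1"
proof -
  have "length xs = n"
    using assms(2) unfolding or_pow_verts_def by simp
  with assms show ?thesis
    using or_pow_verts_nth[OF assms(2)] by (auto simp: tensor_pow_conv_prod intro!: prod_nonneg prod_le_1)
qed

lemma in_STAB_bounds:
  assumes "in_STAB m E p"
  shows "\<forall>i\<in>{1..m}. 0 \<le> p i \<and> p i \<le> 1"
proof -
  obtain w where w0: "\<forall>S. indep m E S \<longrightarrow> 0 \<le> w S"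
    and w1: "(\<Sum>S\<in>{S. indep m E S}. w S) = 1"
    and wp: "\<forall>i\<in>{1..m}. p i = (\<Sum>S\<in>{S. indep m E S}. w S * indicator S i)"
    using assms unfolding in_STAB_def by blast
  have "0 \<le> (\<Sum>S\<in>{S. indep m E S}. w S * indicator S i)"
    and "(\<Sum>S\<in>{S. indep m E S}. w S * indicator S i) \<le> (\<Sum>S\<in>{S. indep m E S}. w S)" for i
    using w0 by (auto intro!: sum_nonneg sum_mono simp: indicator_def)
  then show ?thesis using wp w1 by simp
qed

lemma in_TH_bounds: "in_TH m E p \<Longrightarrow> \<forall>i\<in>{1..m}. 0 \<le> p i \<and> p i \<le> 1"
  unfolding in_TH_def by blast

lemma prod_cinner_clique_orthonormal:
  assumes unit: "\<forall>i\<in>{1..m}. cinner d (u i) (u i) = 1"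
    and orth: "\<forall>i\<in>{1..m}. \<forall>j\<in>{1..m}. E i j \<longrightarrow> cinner d (u i) (u j) = 0"
    and clique: "is_clique (or_pow_verts m n) (or_pow_adj E) C"
    and "xs \<in> C" "ys \<in> C"
  shows "(\<Prod>k<n. cinner d (u (xs ! k)) (u (ys ! k))) = (if xs = ys then 1 else 0)"
proof -
  have xs: "xs \<in> or_pow_verts m n" and ys: "ys \<in> or_pow_verts m n"
    using assms(4,5) clique_subset_verts[OF clique] by blast+
  show ?thesis
  proof (cases "xs = ys")
    case True
    with xs unit show ?thesis
      by (auto intro!: prod.neutral dest: or_pow_verts_nth)
  next
    case False
    with assms(4,5) clique have "or_pow_adj E xs ys"
      unfolding is_clique_def by blast
    with xs ys obtain k where k: "k < n" "E (xs ! k) (ys ! k)"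
      by (rule or_pow_adj_coordinate)
    then have "cinner d (u (xs ! k)) (u (ys ! k)) = 0"
      using orth or_pow_verts_nth[OF xs k(1)] or_pow_verts_nth[OF ys k(1)] by blast
    with k(1) False show ?thesis
      by (simp add: prod_zero bexI[of _ k])
  qed
qed

lemma TH_clique_sum_le_1:
  assumes "in_TH m E p" and clique: "is_clique (or_pow_verts m n) (or_pow_adj E) C"
  shows "(\<Sum>xs\<in>C. tensor_pow p xs) \<le> 1"
proof -
  obtain d \<psi> u where \<psi>: "cinner d \<psi> \<psi> = 1"
    and unit: "\<forall>i\<in>{1..m}. cinner d (u i) (u i) = 1"
    and orth: "\<forall>i\<in>{1..m}. \<forall>j\<in>{1..m}. E i j \<longrightarrow> cinner d (u i) (u j) = 0"
    and p: "\<forall>i\<in>{1..m}. p i = (cmod (cinner d (u i) \<psi>))\<^sup>2"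
    using assms(1) unfolding in_TH_def by blast
  define I where "I = PiE {..<n} (\<lambda>_. {..<d})"
  define tensor where "tensor x g = (\<Prod>k<n. x k (g k))" for x :: "nat \<Rightarrow> nat \<Rightarrow> complex" and g
  have factor: "cinner_on I (tensor x) (tensor y) = (\<Prod>k<n. cinner d (x k) (y k))" for x y
    unfolding I_def tensor_def cinner_conv_cinner_on by (rule cinner_on_prod_PiE) auto
  have orthonormal: "cinner_on I (tensor (\<lambda>k. u (xs ! k))) (tensor (\<lambda>k. u (ys ! k)))
      = (if xs = ys then 1 else 0)" if "xs \<in> C" "ys \<in> C" for xs ys
    unfolding factor using unit orth clique that by (rule prod_cinner_clique_orthonormal)
  have "(\<Sum>xs\<in>C. tensor_pow p xs) = (\<Sum>xs\<in>C. \<Prod>k<n. (cmod (cinner d (u (xs ! k)) \<psi>))\<^sup>2)"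
    using p by (intro sum_tensor_pow_clique[OF clique]) simp
  also have "\<dots> = (\<Sum>xs\<in>C. (cmod (cinner_on I (tensor (\<lambda>k. u (xs ! k))) (tensor (\<lambda>_. \<psi>))))\<^sup>2)"
    by (simp only: factor prod_norm[symmetric] prod_power_distrib)
  also have "\<dots> \<le> Re (cinner_on I (tensor (\<lambda>_. \<psi>)) (tensor (\<lambda>_. \<psi>)))"
    using finite_or_pow_clique[OF clique] orthonormal by (rule bessel_inequality)
  also have "\<dots> = 1"
    using \<psi> by (simp add: factor)
  finally show ?thesis .
qed

lemma card_clique_Int_box_le_1:
  assumes clique: "is_clique (or_pow_verts m n) (or_pow_adj E) C"
    and stable: "\<forall>k<n. indep m E (S k)"
  shows "card (C \<inter> {xs. \<forall>k<n. xs ! k \<in> S k}) \<le> 1"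
proof -
  have unique: "xs = ys"
    if "xs \<in> C" "ys \<in> C" "\<forall>k<n. xs ! k \<in> S k" "\<forall>k<n. ys ! k \<in> S k" for xs ys
  proof (rule ccontr)
    assume "xs \<noteq> ys"
    with clique that(1,2) have "or_pow_adj E xs ys"
      unfolding is_clique_def by blast
    with that(1,2) clique_subset_verts[OF clique] obtain k where "k < n" "E (xs ! k) (ys ! k)"
      by (meson or_pow_adj_coordinate subsetD)
    with that(3,4) stable show False
      unfolding indep_def by blast
  qed
  have "finite (C \<inter> {xs. \<forall>k<n. xs ! k \<in> S k})"
    using finite_or_pow_clique[OF clique] by blast
  from card_le_Suc0_iff_eq[OF this] unique show ?thesis
    by (simp only: One_nat_def) blast
qed

lemma prod_indicator_box:
  "(\<Prod>k<n. indicator (S k) (xs ! k) :: real) = indicator {xs. \<forall>k<n. xs ! k \<in> S k} xs"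
  unfolding indicator_def by (auto intro: prod_zero)

lemma STAB_clique_sum_le_1:
  assumes "in_STAB m E p" and clique: "is_clique (or_pow_verts m n) (or_pow_adj E) C"
  shows "(\<Sum>xs\<in>C. tensor_pow p xs) \<le> 1"
proof -
  define Ind where "Ind = {S. indep m E S}"
  obtain w where w0: "\<forall>S\<in>Ind. 0 \<le> w S" and w1: "(\<Sum>S\<in>Ind. w S) = 1"
    and p: "\<forall>i\<in>{1..m}. p i = (\<Sum>S\<in>Ind. w S * indicator S i)"
    using assms(1) unfolding in_STAB_def Ind_def by blast
  have "finite Ind"
    by (rule finite_subset[of _ "Pow {1..m}"]) (auto simp: Ind_def indep_def)
  define F where "F = PiE {..<n} (\<lambda>_. Ind)"
  have "(\<Sum>xs\<in>C. tensor_pow p xs) = (\<Sum>xs\<in>C. \<Prod>k<n. \<Sum>S\<in>Ind. w S * indicator S (xs ! k))"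
    using p by (intro sum_tensor_pow_clique[OF clique]) simp
  also have "\<dots> = (\<Sum>xs\<in>C. \<Sum>g\<in>F. (\<Prod>k<n. w (g k)) * indicator {xs. \<forall>k<n. xs ! k \<in> g k} xs)"
    unfolding F_def prod_indicator_box[symmetric] prod.distrib[symmetric]
    using \<open>finite Ind\<close> by (intro sum.cong refl prod_sum_PiE) auto
  also have "\<dots> = (\<Sum>g\<in>F. (\<Prod>k<n. w (g k)) * real (card (C \<inter> {xs. \<forall>k<n. xs ! k \<in> g k})))"
    using finite_or_pow_clique[OF clique] by (subst sum.swap) (simp add: mult.commute Int_def)
  also have "\<dots> \<le> (\<Sum>g\<in>F. (\<Prod>k<n. w (g k)))"
  proof (intro sum_mono mult_right_le_one_le prod_nonneg)
    fix g assume "g \<in> F"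
    then show "real (card (C \<inter> {xs. \<forall>k<n. xs ! k \<in> g k})) \<le> 1"
      using card_clique_Int_box_le_1[OF clique] by (auto simp: F_def Ind_def)
  qed (use w0 in \<open>auto simp: F_def\<close>)
  also have "\<dots> = 1"
    unfolding F_def by (subst prod_sum_PiE[symmetric]) (use \<open>finite Ind\<close> w1 in auto)
  finally show ?thesis .
qed

theorem lemma3:
  fixes m :: nat and E :: "nat \<Rightarrow> nat \<Rightarrow> bool" and p :: "nat \<Rightarrow> real"
  assumes "simple_graph m E"
    and "in_STAB m E p \<or> in_TH m E p"
  shows "\<forall>n\<ge>1. tensor_pow p \<in> QSTAB (or_pow_verts m n) (or_pow_adj E)"
proof (intro allI impI)
  fix n :: nat
  have "\<forall>i\<in>{1..m}. 0 \<le> p i \<and> p i \<le> 1"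
    using assms(2) in_STAB_bounds in_TH_bounds by blast
  then have "\<forall>xs\<in>or_pow_verts m n. 0 \<le> tensor_pow p xs \<and> tensor_pow p xs \<le> 1"
    using tensor_pow_bounds by blast
  moreover have "(\<Sum>xs\<in>C. tensor_pow p xs) \<le> 1"
    if "is_clique (or_pow_verts m n) (or_pow_adj E) C" for C
    using assms(2) that STAB_clique_sum_le_1 TH_clique_sum_le_1 by blast
  ultimately show "tensor_pow p \<in> QSTAB (or_pow_verts m n) (or_pow_adj E)"
    unfolding QSTAB_def by blast
qed

end
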